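(* Under the FP-UCB algorithm, for every horizon $T$, $$\sum_{k=1}^{T}\mathbb{P}\big(a^*(\theta^o)\notin A_k\big)\le 4|A|,$$ where $A_k$ is the set computed in episode $k$ (taken to be defined for all $k\le T$ by continuing the algorithm's rule).
   Context: Setting: there are $L$ arms $[L]=\{1,\dots,L\}$ and a known finite parameter set $\Theta$. For each $\theta\in\Theta$ and arm $i$, $P_i(\cdot;\theta)$ is a known probability distribution supported on $[0,1]$ with known mean $\mu_i(\theta)$. An unknown true parameter $\theta^o\in\Theta$ governs the rewards: the reward $X_i(\tau)$ from the $\tau$-th pull of arm $i$ is drawn from $P_i(\cdot;\theta^o)$; rewards of a given arm are i.i.d. and independent across arms. Let $a^*(\theta)=\arg\max_{i\in[L]}\mu_i(\theta)$, assumed unique for every $\theta\in\Theta$. Logarithms are natural. Notation: $n_i(t)=\sum_{\tau=1}^t \mathbb{1}\{a(\tau)=i\}$; $\hat\mu_i(t)=\frac{1}{n_i(t)}\sum_{\tau=1}^{n_i(t)}X_i(\tau)$; $A=\{a^*(\theta):\theta\in\Theta\}$. FP-UCB algorithm: at times $t=1,\dots,|A|$ select each arm of $A$ once. Then set episode counter $k=1$, $t=|A|+1$, and repeatedly: let $t_k=t-1$ and compute $A_k=\{a^*(\theta):\theta\in\Theta,\ \forall i\in A,\ |\hat\mu_i(t_k)-\mu_i(\theta)|\le\sqrt{3\log(k)/n_i(t_k)}\}$; if $A_k\ne\varnothing$, select each arm of $A_k$ once ($t\leftarrow t+|A_k|$), otherwise select each arm of $A$ once ($t\leftarrow t+|A|$);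 then $k\leftarrow k+1$. *)

theory Defs
  imports "HOL-Probability.Probability"
begin

text \<open>Arms are the natural numbers 1..L; parameters have type 'th; the mean of arm i
  under parameter th is mu i th.  The optimal arm a*(th) is the (assumed unique) maximiser.\<close>

definition astar :: "(nat \<Rightarrow> 'th \<Rightarrow> real) \<Rightarrow> nat \<Rightarrow> 'th \<Rightarrow> nat" where
  "astar mu L th = (THE i. i \<in> {1..L} \<and> (\<forall>j\<in>{1..L}. mu j th \<le> mu i th))"

definition optset :: "'th set \<Rightarrow> (nat \<Rightarrow> 'th \<Rightarrow> real) \<Rightarrow> nat \<Rightarrow> nat set" where
  "optset Th mu L = astar mu L ` Th"

text \<open>Empirical mean of arm i after c pulls; x i tau is the reward of the tau-th pull
  (tau \<ge> 1) of arm i.\<close>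
definition empmean :: "(nat \<Rightarrow> nat \<Rightarrow> real) \<Rightarrow> nat \<Rightarrow> nat \<Rightarrow> real" where
  "empmean x c i = (\<Sum>tau = 1..c. x i tau) / real c"

definition episet :: "'th set \<Rightarrow> (nat \<Rightarrow> 'th \<Rightarrow> real) \<Rightarrow> nat \<Rightarrow> (nat \<Rightarrow> nat \<Rightarrow> real)
    \<Rightarrow> nat \<Rightarrow> (nat \<Rightarrow> nat) \<Rightarrow> nat set" where
  "episet Th mu L x k c =
     {astar mu L th | th. th \<in> Th \<and>
        (\<forall>i\<in>optset Th mu L. \<bar>empmean x (c i) i - mu i th\<bar> \<le> sqrt (3 * ln (real k) / real (c i)))}"

text \<open>Pull counts n_i(t_k) at the end of episode k (k = 0: after the initial phase,
  i.e. at time |A|).  Within an episode the order of pulls is irrelevant for counts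
  and empirical means, since rewards of arm i are indexed by its pull number.\<close>
fun fp_counts :: "'th set \<Rightarrow> (nat \<Rightarrow> 'th \<Rightarrow> real) \<Rightarrow> nat \<Rightarrow> (nat \<Rightarrow> nat \<Rightarrow> real)
    \<Rightarrow> nat \<Rightarrow> nat \<Rightarrow> nat" where
  "fp_counts Th mu L x 0 = (\<lambda>i. if i \<in> optset Th mu L then 1 else 0)"
| "fp_counts Th mu L x (Suc k) =
     (let S = episet Th mu L x (Suc k) (fp_counts Th mu L x k) in
      (\<lambda>i. fp_counts Th mu L x k i +
            (if S \<noteq> {} then (if i \<in> S then 1 else 0)
             else (if i \<in> optset Th mu L then 1 else 0))))"

definition fp_A :: "'th set \<Rightarrow> (nat \<Rightarrow> 'th \<Rightarrow> real) \<Rightarrow> nat \<Rightarrow> (nat \<Rightarrow> nat \<Rightarrow> real)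
    \<Rightarrow> nat \<Rightarrow> nat set" where
  "fp_A Th mu L x k = episet Th mu L x k (fp_counts Th mu L x (k - 1))"

end

theory Submission imports Defs begin

(* If a*(tho) is missing from A_k, then tho itself failed the confidence test of episode k,
   so some arm i in A has an empirical mean at distance at least sqrt (3 ln k / n_i) from
   mu_i(tho).  The pull count n_i is random, but it lies in {1..k}; a union bound over the
   |A| k fixed pairs (i, s), each controlled by Hoeffding's inequality for s i.i.d. rewards,
   gives P(a*(tho) \<notin> A_k) \<le> |A| k * 2 k^-6 = 2 |A| / k^5.  Summing over k with
   sum 1/k^5 \<le> 2 yields 4 |A|. *)

lemma (in prob_space) indep_sets_reindex:
  assumes "indep_sets F (f ` J)" "inj_on f J"
  shows "indep_sets (\<lambda>j. F (f j)) J"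
proof (rule indep_setsI)
  show "F (f j) \<subseteq> events" if "j \<in> J" for j
    using assms(1) that unfolding indep_sets_def by auto
next
  fix K A assume K: "K \<subseteq> J" "K \<noteq> {}" "finite K" and A: "\<forall>j\<in>K. A j \<in> F (f j)"
  have inj: "inj_on f K" using assms(2) K(1) inj_on_subset by blast
  define B where "B y = A (the_inv_into K f y)" for y
  have B: "B (f j) = A j" if "j \<in> K" for j
    unfolding B_def using the_inv_into_f_f[OF inj that] by simp
  have "prob (\<Inter>y\<in>f ` K. B y) = (\<Prod>y\<in>f ` K. prob (B y))"
    using K A B by (intro indep_setsD[OF assms(1)]) auto
  moreover have "(\<Inter>y\<in>f ` K. B y) = (\<Inter>j\<in>K. A j)" using B by auto
  moreover have "(\<Prod>y\<in>f ` K. prob (B y)) = (\<Prod>j\<in>K. prob (A j))"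
    using B by (simp add: prod.reindex[OF inj])
  ultimately show "prob (\<Inter>j\<in>K. A j) = (\<Prod>j\<in>K. prob (A j))" by simp
qed

lemma (in prob_space) indep_vars_reindex:
  assumes "indep_vars F X (f ` J)" "inj_on f J"
  shows "indep_vars (\<lambda>j. F (f j)) (\<lambda>j. X (f j)) J"
  using assms unfolding indep_vars_def
  by (auto intro: indep_sets_reindex[where F="\<lambda>i. sigma_sets (space M) {X i -` A \<inter> space M |A. A \<in> sets (F i)}"])

lemma (in prob_space) Hoeffding_iid_unit_interval:
  fixes Z :: "'i \<Rightarrow> 'a \<Rightarrow> real" and \<epsilon> :: real
  assumes indep: "indep_vars (\<lambda>_. borel) Z I" and "finite I" "I \<noteq> {}"
    and distr: "\<And>i. i \<in> I \<Longrightarrow> distr M borel (Z i) = Q"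
    and support: "emeasure Q {0..1} = 1" and "\<epsilon> \<ge> 0"
  shows "prob {w \<in> space M. \<epsilon> \<le> \<bar>(\<Sum>i\<in>I. Z i w) / card I - (\<integral>r. r \<partial>Q)\<bar>}
           \<le> 2 * exp (-2 * card I * \<epsilon>\<^sup>2)"
proof -
  obtain i0 where i0: "i0 \<in> I" using \<open>I \<noteq> {}\<close> by blast
  have rv: "random_variable borel (Z i0)" using indep i0 unfolding indep_vars_def by blast
  have Q: "Q = distr M borel (Z i0)" using distr[OF i0] by simp
  interpret Q: prob_space Q unfolding Q using rv by (rule prob_space_distr)
  have "{0..1} \<in> sets Q" by (simp add: Q)
  moreover have "Q.prob {0..1} = 1" using support Q.emeasure_eq_measure by simp
  ultimately have "AE r in Q. r \<in> {0..1}" by (simp only: Q.AE_in_set_eq_1)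
  then have AE: "AE w in M. Z i0 w \<in> {0..1}"
    by (subst (asm) Q, subst (asm) AE_distr_iff) (use rv in simp_all)
  have mean: "(\<integral>r. r \<partial>Q) = expectation (Z i0)"
    unfolding Q using rv by (simp add: integral_distr)
  interpret Hoeffding_ineq_iid M I Z "Z i0" 0 1 "expectation (Z i0)"
    by unfold_locales (use assms rv AE Q in auto)
  show ?thesis
    using Hoeffding_ineq_abs_ge'[of \<epsilon>] assms by (simp add: mean)
qed

lemma sum_inverse_power_le_two:
  assumes "2 \<le> n"
  shows "(\<Sum>k = 1..T. 1 / real k ^ n) \<le> 2"
proof -
  have telescope: "(\<Sum>k = 1..T. 1 / real k ^ 2) \<le> 2 - 1 / real T" if "T \<ge> 1" for T
    using that
  proof (induction T rule: dec_induct)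
    case (step T)
    have "1 / real (Suc T) ^ 2 \<le> 1 / (real T * real (Suc T))"
      using step.hyps by (intro divide_left_mono) (auto simp: power2_eq_square)
    also have "\<dots> = 1 / real T - 1 / real (Suc T)"
      using step.hyps by (simp add: field_simps)
    finally show ?case using step.IH by simp
  qed simp
  have "(\<Sum>k = 1..T. 1 / real k ^ n) \<le> (\<Sum>k = 1..T. 1 / real k ^ 2)"
    using assms by (intro sum_mono divide_left_mono power_increasing) auto
  also have "\<dots> \<le> 2"
  proof (cases "T = 0")
    case False
    then have "(\<Sum>k = 1..T. 1 / real k ^ 2) \<le> 2 - 1 / real T" using telescope by simp
    moreover have "0 \<le> 1 / real T" by simp
    ultimately show ?thesis by linarith
  qed simp
  finally show ?thesis .
qed

lemma fp_counts_Suc_bounds: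
  "fp_counts Th mu L x k i \<le> fp_counts Th mu L x (Suc k) i"
  "fp_counts Th mu L x (Suc k) i \<le> Suc (fp_counts Th mu L x k i)"
  by (simp_all add: Let_def)

lemma fp_counts_optset_bounds:
  assumes "i \<in> optset Th mu L"
  shows "1 \<le> fp_counts Th mu L x k i" "fp_counts Th mu L x k i \<le> Suc k"
proof (induction k)
  case (Suc k)
  { case 1 show ?case using Suc.IH(1) fp_counts_Suc_bounds(1)[of Th mu L x k i] by linarith }
  { case 2 show ?case using Suc.IH(2) fp_counts_Suc_bounds(2)[of Th mu L x k i] by linarith }
qed (use assms in simp_all)

lemma astar_notin_fp_A_imp_deviation:
  assumes "tho \<in> Th" "1 \<le> k" "astar mu L tho \<notin> fp_A Th mu L x k"
  obtains i s where "i \<in> optset Th mu L" "s \<in> {1..k}"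
    "sqrt (3 * ln (real k) / real s) \<le> \<bar>empmean x s i - mu i tho\<bar>"
proof -
  define c where "c = fp_counts Th mu L x (k - 1)"
  have "astar mu L tho \<notin> episet Th mu L x k c"
    using assms(3) by (simp add: fp_A_def c_def)
  then obtain i where i: "i \<in> optset Th mu L"
    and far: "\<not> \<bar>empmean x (c i) i - mu i tho\<bar> \<le> sqrt (3 * ln (real k) / real (c i))"
    unfolding episet_def using assms(1) by blast
  have "c i \<in> {1..k}"
    using fp_counts_optset_bounds[OF i, of x "k - 1"] assms(2) by (simp add: c_def)
  with i show ?thesis using far by (intro that) auto
qed

(* Measurability of the rewards and the remaining hypotheses on P i tho follow from X_indep
   and X_distr, so they are not assumed here. *)
locale fp_ucb_model = prob_space M
  for M :: "'w measure" and X :: "nat \<Rightarrow> nat \<Rightarrow> 'w \<Rightarrow> real"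
    and P :: "nat \<Rightarrow> 'th \<Rightarrow> real measure" and mu :: "nat \<Rightarrow> 'th \<Rightarrow> real"
    and Th :: "'th set" and tho :: 'th and L :: nat +
  assumes finite_Th: "finite Th" and tho_in_Th: "tho \<in> Th"
    and P_support: "\<And>i. i \<in> {1..L} \<Longrightarrow> emeasure (P i tho) {0..1} = 1"
    and mu_eq_mean: "\<And>i. i \<in> {1..L} \<Longrightarrow> mu i tho = (\<integral>r. r \<partial>P i tho)"
    and unique_optimal_arm:
      "\<And>th. th \<in> Th \<Longrightarrow> \<exists>!i. i \<in> {1..L} \<and> (\<forall>j\<in>{1..L}. mu j th \<le> mu i th)"
    and X_distr: "\<And>i tau. i \<in> {1..L} \<Longrightarrow> 1 \<le> tau \<Longrightarrow> distr M borel (X i tau) = P i tho"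
    and X_indep: "indep_vars (\<lambda>_. borel) (\<lambda>p. X (fst p) (snd p)) ({1..L} \<times> {1..})"
begin

abbreviation rewards :: "'w \<Rightarrow> nat \<Rightarrow> nat \<Rightarrow> real" where
  "rewards w \<equiv> \<lambda>i tau. X i tau w"

lemma X_measurable:
  assumes "i \<in> {1..L}" "1 \<le> tau"
  shows "X i tau \<in> borel_measurable M"
proof -
  have "(i, tau) \<in> {1..L} \<times> {1..}" using assms by simp
  then have "random_variable borel ((\<lambda>p. X (fst p) (snd p)) (i, tau))"
    using X_indep unfolding indep_vars_def by blast
  then show ?thesis by simp
qed

lemma optset_subset: "optset Th mu L \<subseteq> {1..L}"
  unfolding optset_def astar_def using theI'[OF unique_optimal_arm] by blast

lemma prob_deviation_le:
  assumes i: "i \<in> {1..L}" and "1 \<le> s" "1 \<le> k"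
  shows "prob {w \<in> space M. sqrt (3 * ln (real k) / real s) \<le> \<bar>empmean (rewards w) s i - mu i tho\<bar>}
           \<le> 2 / real k ^ 6"
proof -
  have "indep_vars (\<lambda>_. borel) (\<lambda>p. X (fst p) (snd p)) (Pair i ` {1..s})"
    using i by (intro indep_vars_subset[OF X_indep]) auto
  then have indep: "indep_vars (\<lambda>_. borel) (X i) {1..s}"
    using indep_vars_reindex[of "\<lambda>_. borel" "\<lambda>p. X (fst p) (snd p)" "Pair i" "{1..s}"]
    by (simp add: inj_on_def)
  have "prob {w \<in> space M. sqrt (3 * ln (real k) / real s) \<le> \<bar>empmean (rewards w) s i - mu i tho\<bar>}
          \<le> 2 * exp (-2 * real s * (sqrt (3 * ln (real k) / real s))\<^sup>2)"
    using Hoeffding_iid_unit_interval[OF indep, of "P i tho" "sqrt (3 * ln (real k) / real s)"]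
      assms X_distr P_support
    by (simp add: empmean_def mu_eq_mean)
  also have "-2 * real s * (sqrt (3 * ln (real k) / real s))\<^sup>2 = - ln (real k ^ 6)"
    using assms by (simp add: ln_realpow)
  also have "2 * exp (- ln (real k ^ 6)) = 2 / real k ^ 6"
    using assms by (simp add: exp_minus field_simps)
  finally show ?thesis .
qed

lemma prob_fp_A_miss_le:
  assumes "1 \<le> k"
  shows "prob {w \<in> space M. astar mu L tho \<notin> fp_A Th mu L (rewards w) k}
           \<le> 2 * card (optset Th mu L) / real k ^ 5"
proof -
  let ?A = "optset Th mu L"
  define D where "D p = {w \<in> space M. sqrt (3 * ln (real k) / real (snd p))
                    \<le> \<bar>empmean (rewards w) (snd p) (fst p) - mu (fst p) tho\<bar>}" for p
  have fin: "finite (?A \<times> {1..k})" using finite_Th by (simp add: optset_def)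
  have events: "D p \<in> events" if "p \<in> ?A \<times> {1..k}" for p
  proof -
    have "fst p \<in> {1..L}" using that optset_subset by auto
    then have "X (fst p) tau \<in> borel_measurable M" if "tau \<in> {1..snd p}" for tau
      using that X_measurable by simp
    then have [measurable]: "(\<lambda>w. \<Sum>tau = 1..snd p. X (fst p) tau w) \<in> borel_measurable M"
      by (rule borel_measurable_sum)
    show ?thesis unfolding D_def empmean_def by measurable
  qed
  have "{w \<in> space M. astar mu L tho \<notin> fp_A Th mu L (rewards w) k} \<subseteq> (\<Union>p\<in>?A \<times> {1..k}. D p)"
  proof
    fix w assume w: "w \<in> {w \<in> space M. astar mu L tho \<notin> fp_A Th mu L (rewards w) k}"
    then obtain i s where "i \<in> ?A" "s \<in> {1..k}"
      "sqrt (3 * ln (real k) / real s) \<le> \<bar>empmean (rewards w) s i - mu i tho\<bar>"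
      using astar_notin_fp_A_imp_deviation[OF tho_in_Th assms] by blast
    with w show "w \<in> (\<Union>p\<in>?A \<times> {1..k}. D p)"
      unfolding D_def by (intro UN_I[of "(i, s)"]) auto
  qed
  then have "prob {w \<in> space M. astar mu L tho \<notin> fp_A Th mu L (rewards w) k}
               \<le> prob (\<Union>p\<in>?A \<times> {1..k}. D p)"
    using fin events by (intro finite_measure_mono) auto
  also have "\<dots> \<le> (\<Sum>p\<in>?A \<times> {1..k}. prob (D p))"
    using fin events by (intro finite_measure_subadditive_finite) auto
  also have "\<dots> \<le> (\<Sum>p\<in>?A \<times> {1..k}. 2 / real k ^ 6)"
    using assms optset_subset unfolding D_def by (intro sum_mono prob_deviation_le) auto
  also have "\<dots> = 2 * card ?A / real k ^ 5"
    using assms by (simp add: card_cartesian_product field_simps eval_nat_numeral)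
  finally show ?thesis .
qed

theorem sum_prob_fp_A_miss_le:
  "(\<Sum>k = 1..T. prob {w \<in> space M. astar mu L tho \<notin> fp_A Th mu L (rewards w) k})
     \<le> 4 * card (optset Th mu L)"
proof -
  let ?c = "real (card (optset Th mu L))"
  have "(\<Sum>k = 1..T. prob {w \<in> space M. astar mu L tho \<notin> fp_A Th mu L (rewards w) k})
          \<le> (\<Sum>k = 1..T. 2 * ?c * (1 / real k ^ 5))"
    using prob_fp_A_miss_le by (intro sum_mono) simp
  also have "\<dots> = 2 * ?c * (\<Sum>k = 1..T. 1 / real k ^ 5)"
    by (simp add: sum_distrib_left)
  also have "\<dots> \<le> 2 * ?c * 2"
    by (intro mult_left_mono sum_inverse_power_le_two) auto
  finally show ?thesis by simp
qed

end

theorem mainTheorem6: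
  fixes M :: "'w measure"
    and X :: "nat \<Rightarrow> nat \<Rightarrow> 'w \<Rightarrow> real"
    and P :: "nat \<Rightarrow> 'th \<Rightarrow> real measure"
    and mu :: "nat \<Rightarrow> 'th \<Rightarrow> real"
    and Th :: "'th set" and tho :: 'th and L T :: nat
  assumes "prob_space M"
    and "finite Th" and "tho \<in> Th"
    and "\<And>i th. i \<in> {1..L} \<Longrightarrow> th \<in> Th \<Longrightarrow> prob_space (P i th)"
    and "\<And>i th. i \<in> {1..L} \<Longrightarrow> th \<in> Th \<Longrightarrow> sets (P i th) = sets borel"
    and "\<And>i th. i \<in> {1..L} \<Longrightarrow> th \<in> Th \<Longrightarrow> emeasure (P i th) {0..1} = 1"
    and "\<And>i th. i \<in> {1..L} \<Longrightarrow> th \<in> Th \<Longrightarrow> mu i th = (\<integral>r. r \<partial>(P i th))"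
    and "\<And>th. th \<in> Th \<Longrightarrow> \<exists>!i. i \<in> {1..L} \<and> (\<forall>j\<in>{1..L}. mu j th \<le> mu i th)"
    and "\<And>i tau. i \<in> {1..L} \<Longrightarrow> tau \<ge> 1 \<Longrightarrow> X i tau \<in> borel_measurable M"
    and "\<And>i tau. i \<in> {1..L} \<Longrightarrow> tau \<ge> 1 \<Longrightarrow> distr M borel (X i tau) = P i tho"
    and "prob_space.indep_vars M (\<lambda>_. borel) (\<lambda>p. X (fst p) (snd p)) ({1..L} \<times> {1..})"
  shows "(\<Sum>k = 1..T. measure M {w \<in> space M. astar mu L tho \<notin> fp_A Th mu L (\<lambda>i tau. X i tau w) k})
           \<le> 4 * real (card (optset Th mu L))"
proof -
  interpret fp_ucb_model M X P mu Th tho L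
    by (intro fp_ucb_model.intro fp_ucb_model_axioms.intro)
      (fact assms(1-3,8,10,11) assms(6,7)[OF _ assms(3)])+
  show ?thesis using sum_prob_fp_A_miss_le[of T] by simp
qed

end
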